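(* For $u\in H^2(I)^d$ define $\mathcal J_{h,2}u(x):=u(a)+\int_a^x\mathcal I_{h,1}u'\,d\sigma$. Then $\mathcal J_{h,2}u\in\mathcal S^{2,0}(\mathcal T_h)^d$ and $$\int_I|(\mathcal J_{h,2}u)''|^2\,dx=\int_I|(\mathcal I_{h,1}u')'|^2\,dx\le\int_I|u''|^2\,dx.$$ Consequently, given $u_D\in H^2(I)^d$, every minimizer $u\in H^2(I)^d$ of the bending energy $E(u)=\frac12\int_I|u''|^2\,dx$ subject to the boundary conditions $u(a)=u_D(a)$, $u'(a)=u_D'(a)$, $u'(b)=u_D'(b)$ and the discrete inextensibility constraint $\mathcal I_{h,1}(|u'|^2-1)=0$ (i.e. $|u'(z)|=1$ for all $z\in\mathcal N_1(\mathcal T_h)$) belongs to $\mathcal S^{2,0}(\mathcal T_h)^d$.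
   Context: Mesh notation: $I=(a,b)\subset\mathbb R$, $a=x_0<x_1<\dots<x_M=b$, $I_i=[x_{i-1},x_i]$, $h_i=x_i-x_{i-1}$, $h=\max_i h_i$, $\mathcal T_h=\{I_1,\dots,I_M\}$. The meshes are quasi-uniform: there is $c>0$ independent of $h$ with $h\le c\,h_i$ for all $i$. Let $m_i=(x_{i-1}+x_i)/2$, $\mathcal N_1(\mathcal T_h)=\{x_0,\dots,x_M\}$, $\mathcal N_2(\mathcal T_h)=\mathcal N_1(\mathcal T_h)\cup\{m_1,\dots,m_M\}$. For $k\ge1$, $l\in\{0,1\}$, $\mathcal S^{k,l}(\mathcal T_h)=\{v\in C^l(\bar I): v|_{I_i}\in\mathcal P_k\ \forall i\}$. For $k\in\{1,2\}$, $\mathcal I_{h,k}:C^0(\bar I)^d\to\mathcal S^{k,0}(\mathcal T_h)^d$ is the nodal interpolant defined by $\mathcal I_{h,k}v(z)=v(z)$ for all $z\in\mathcal N_k(\mathcal T_h)$ (applied componentwise). *)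

theory Defs
  imports "HOL-Analysis.Analysis"
begin

definition is_mesh :: "real \<Rightarrow> real \<Rightarrow> (nat \<Rightarrow> real) \<Rightarrow> nat \<Rightarrow> bool" where
  "is_mesh a b xs M \<longleftrightarrow> 1 \<le> M \<and> xs 0 = a \<and> xs M = b \<and> (\<forall>i<M. xs i < xs (Suc i))"

definition S_k0 :: "nat \<Rightarrow> (nat \<Rightarrow> real) \<Rightarrow> nat \<Rightarrow> (real \<Rightarrow> 'a::euclidean_space) \<Rightarrow> bool" where
  "S_k0 k xs M v \<longleftrightarrow> continuous_on {xs 0..xs M} v \<and>
     (\<forall>i\<in>{1..M}. \<exists>c::nat \<Rightarrow> 'a. \<forall>t\<in>{xs (i - 1)..xs i}. v t = (\<Sum>j\<le>k. t ^ j *\<^sub>R c j))"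

text \<open>Nodal P1 interpolant I_{h,1}: on the element [xs j, xs (Suc j)] containing t,
  linear interpolation of the nodal values.\<close>
definition interp1 :: "(nat \<Rightarrow> real) \<Rightarrow> (real \<Rightarrow> 'a::euclidean_space) \<Rightarrow> real \<Rightarrow> 'a" where
  "interp1 xs v t = (let j = (LEAST j. t \<le> xs (Suc j)) in
      v (xs j) + ((t - xs j) / (xs (Suc j) - xs j)) *\<^sub>R (v (xs (Suc j)) - v (xs j)))"

text \<open>g is a weak (a.e.) derivative of f on [a,b]: g is Lebesgue integrable and f is its
  indefinite integral (so f is absolutely continuous with f' = g a.e.).\<close>
definition wderiv :: "real \<Rightarrow> real \<Rightarrow> (real \<Rightarrow> 'a::euclidean_space) \<Rightarrow> (real \<Rightarrow> 'a) \<Rightarrow> bool" where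
  "wderiv a b f g \<longleftrightarrow> g absolutely_integrable_on {a..b} \<and>
     (\<forall>t\<in>{a..b}. f t = f a + integral {a..t} g)"

definition sq_int :: "real \<Rightarrow> real \<Rightarrow> (real \<Rightarrow> 'a::euclidean_space) \<Rightarrow> bool" where
  "sq_int a b g \<longleftrightarrow> (\<lambda>t. (norm (g t))\<^sup>2) integrable_on {a..b}"

text \<open>u \<in> H^2(a,b)^d with (continuous) first derivative u1 and weak second derivative u2 \<in> L^2.\<close>
definition H2_rep :: "real \<Rightarrow> real \<Rightarrow> (real \<Rightarrow> 'a::euclidean_space) \<Rightarrow> (real \<Rightarrow> 'a) \<Rightarrow> (real \<Rightarrow> 'a) \<Rightarrow> bool" where
  "H2_rep a b u u1 u2 \<longleftrightarrow>
     (\<forall>t\<in>{a..b}. (u has_vector_derivative u1 t) (at t within {a..b})) \<and>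
     wderiv a b u1 u2 \<and> sq_int a b u2"

definition H2 :: "real \<Rightarrow> real \<Rightarrow> (real \<Rightarrow> 'a::euclidean_space) \<Rightarrow> bool" where
  "H2 a b u \<longleftrightarrow> (\<exists>u1 u2. H2_rep a b u u1 u2)"

definition L2sq :: "real \<Rightarrow> real \<Rightarrow> (real \<Rightarrow> 'a::euclidean_space) \<Rightarrow> real" where
  "L2sq a b g = integral {a..b} (\<lambda>t. (norm (g t))\<^sup>2)"

definition J2 :: "(nat \<Rightarrow> real) \<Rightarrow> (real \<Rightarrow> 'a::euclidean_space) \<Rightarrow> (real \<Rightarrow> 'a) \<Rightarrow> real \<Rightarrow> 'a" where
  "J2 xs u u1 x = u (xs 0) + integral {xs 0..x} (interp1 xs u1)"

definition admissible :: "(nat \<Rightarrow> real) \<Rightarrow> nat \<Rightarrow> (real \<Rightarrow> 'a::euclidean_space) \<Rightarrow> (real \<Rightarrow> 'a)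
     \<Rightarrow> (real \<Rightarrow> 'a) \<Rightarrow> (real \<Rightarrow> 'a) \<Rightarrow> (real \<Rightarrow> 'a) \<Rightarrow> bool" where
  "admissible xs M uD uD1 u u1 u2 \<longleftrightarrow> H2_rep (xs 0) (xs M) u u1 u2 \<and>
     u (xs 0) = uD (xs 0) \<and> u1 (xs 0) = uD1 (xs 0) \<and> u1 (xs M) = uD1 (xs M) \<and>
     (\<forall>i\<le>M. norm (u1 (xs i)) = 1)"

definition bending :: "real \<Rightarrow> real \<Rightarrow> (real \<Rightarrow> 'a::euclidean_space) \<Rightarrow> real" where
  "bending a b u2 = L2sq a b u2 / 2"

end

theory Submission
  imports Defs
begin

(* The derivative of J2 u is the P1 interpolant of u', whose derivative on an element
   [x_j, x_(j+1)] is the difference quotient of u', i.e. the mean of u'' over that element.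
   By Cauchy-Schwarz, h_j |mean|^2 is at most the integral of |u''|^2 over the element, and
   summing over the elements gives the energy estimate; weak derivatives are unique a.e., so it
   holds for every representative of (J2 u)''. If u minimizes the bending energy, then J2 u is
   admissible as well (same value at a, same nodal values of u'), so all elementwise estimates
   are equalities. Equality in Cauchy-Schwarz forces u'' to be constant on each element, hence
   u is piecewise quadratic. *)

section \<open>Weak derivatives\<close>

lemma sigma_finite_lebesgue: "sigma_finite_measure (lebesgue :: real measure)"
  unfolding sigma_finite_measure_def
proof (intro exI[of _ "range (\<lambda>n::nat. {-real n..real n})"] conjI ballI)
  have "\<exists>n::nat. x \<in> {-real n..real n}" for x :: real
    by (rule exI[of _ "nat \<lceil>\<bar>x\<bar>\<rceil>"]) (auto simp: abs_le_iff, linarith+)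
  then show "\<Union> (range (\<lambda>n::nat. {-real n..real n})) = space lebesgue"
    by auto
  fix A assume "A \<in> range (\<lambda>n::nat. {-real n..real n})"
  then show "emeasure lebesgue A \<noteq> \<infinity>"
    by (auto simp: emeasure_lborel_cbox_eq)
qed auto

lemma AE_zero_if_interval_integrals_zero:
  fixes F :: "real \<Rightarrow> 'a::euclidean_space"
  assumes F: "integrable lebesgue F"
    and total: "integral\<^sup>L lebesgue F = 0"
    and intervals: "\<And>x y. (LINT t:{x..y}|lebesgue. F t) = 0"
  shows "AE x in lebesgue. F x = 0"
proof (rule sigma_finite_measure.density_zero[OF sigma_finite_lebesgue F])
  have set_int: "set_integrable lebesgue A F" if "A \<in> sets lebesgue" for A
    unfolding set_integrable_def using integrable_mult_indicator[OF that F] .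
  have borel_lebesgue: "A \<in> sets lebesgue" if "A \<in> sets borel" for A
    using that by simp
  have borel: "(LINT t:A|lebesgue. F t) = 0" if "A \<in> sets borel" for A
    using that
  proof (induction rule: borel_set_induct)
    case empty
    then show ?case by (simp add: set_lebesgue_integral_def)
  next
    case (interval a b)
    show ?case by (rule intervals)
  next
    case (compl A)
    have "(LINT t:(A \<union> -A)|lebesgue. F t) = (LINT t:A|lebesgue. F t) + (LINT t:-A|lebesgue. F t)"
      using compl.hyps by (intro set_integral_Un set_int borel_lebesgue) auto
    moreover have "(LINT t:(A \<union> -A)|lebesgue. F t) = 0"
      using total by (simp add: set_lebesgue_integral_def)
    ultimately show ?case using compl.IH by simp
  next
    case (union A)
    have "(LINT t:(\<Union>i. A i)|lebesgue. F t) = (\<Sum>i. (LINT t:A i|lebesgue. F t))"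
      using union.hyps disjoint_family_onD[OF union.hyps(1)]
      by (intro lebesgue_integral_countable_add set_int borel_lebesgue) auto
    then show ?case using union.IH by simp
  qed
  fix A :: "real set" assume A: "A \<in> sets lebesgue"
  then obtain B N where BN: "B \<in> sets borel" "negligible N" "B \<union> N = A"
    by (rule sets_lebesgue_almost_borel)
  have "(LINT t:A|lebesgue. F t) = (LINT t:B|lebesgue. F t)"
    unfolding set_lebesgue_integral_def
  proof (rule integral_cong_AE)
    show "AE x in lebesgue. indicat_real A x *\<^sub>R F x = indicat_real B x *\<^sub>R F x"
      using BN by (intro AE_I'[of N]) (auto simp: negligible_iff_null_sets indicator_def)
  qed (use integrable_mult_indicator[OF A F] integrable_mult_indicator[OF borel_lebesgue[OF BN(1)] F] in auto)
  then show "(LINT t:A|lebesgue. F t) = 0"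
    using borel[OF BN(1)] by simp
qed

lemma negligible_nonzero_if_interval_integrals_zero:
  fixes k :: "real \<Rightarrow> 'a::euclidean_space"
  assumes k: "k absolutely_integrable_on {a..b}"
    and intervals: "\<And>c d. a \<le> c \<Longrightarrow> d \<le> b \<Longrightarrow> integral {c..d} k = 0"
  shows "negligible {x \<in> {a..b}. k x \<noteq> 0}"
proof -
  define F where "F x = indicator {a..b} x *\<^sub>R k x" for x
  have F: "integrable lebesgue F"
    using k unfolding set_integrable_def F_def .
  have F_intervals: "(LINT t:{x..y}|lebesgue. F t) = 0" for x y
  proof -
    have "(LINT t:{x..y}|lebesgue. F t) = (LINT t:{max x a..min y b}|lebesgue. k t)"
      unfolding set_lebesgue_integral_def F_def
      by (rule arg_cong[where f="integral\<^sup>L lebesgue"]) (auto simp: indicator_def fun_eq_iff)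
    also have "\<dots> = integral {max x a..min y b} k"
      by (rule set_lebesgue_integral_eq_integral(2))
        (rule absolutely_integrable_on_subinterval[OF k], auto)
    also have "\<dots> = 0" by (rule intervals) auto
    finally show ?thesis .
  qed
  have "integral\<^sup>L lebesgue F = (LINT t:{a..b}|lebesgue. F t)"
    unfolding set_lebesgue_integral_def F_def
    by (rule arg_cong[where f="integral\<^sup>L lebesgue"]) (auto simp: indicator_def fun_eq_iff)
  then have "AE x in lebesgue. F x = 0"
    using F_intervals by (intro AE_zero_if_interval_integrals_zero[OF F]) simp_all
  then obtain N where N: "negligible N" "{x. F x \<noteq> 0} \<subseteq> N"
    by (auto simp: eventually_ae_filter_negligible)
  show ?thesis
    by (rule negligible_subset[OF N(1)]) (use N(2) in \<open>auto simp: F_def\<close>)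
qed

lemma wderiv_integrable_on_subinterval:
  fixes f g :: "real \<Rightarrow> 'a::euclidean_space"
  assumes "wderiv a b f g" and "{c..d} \<subseteq> {a..b}"
  shows "g integrable_on {c..d}"
proof -
  have "g absolutely_integrable_on {a..b}"
    using assms(1) unfolding wderiv_def by blast
  then have "g absolutely_integrable_on {c..d}"
    using assms(2) by (rule absolutely_integrable_on_subinterval)
  then show ?thesis by (rule set_lebesgue_integral_eq_integral(1))
qed

lemma wderiv_integral:
  fixes f g :: "real \<Rightarrow> 'a::euclidean_space"
  assumes w: "wderiv a b f g" and "a \<le> c" "c \<le> d" "d \<le> b"
  shows "integral {c..d} g = f d - f c"
proof -
  have "\<forall>t\<in>{a..b}. f t = f a + integral {a..t} g"
    using w unfolding wderiv_def by blast
  then have fd: "f d = f a + integral {a..d} g" and fc: "f c = f a + integral {a..c} g"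
    using assms(2-4) by (meson atLeastAtMost_iff order.trans)+
  have "g integrable_on {a..d}"
    using assms(4) by (intro wderiv_integrable_on_subinterval[OF w]) auto
  then have "integral {a..c} g + integral {c..d} g = integral {a..d} g"
    using assms(2,3) by (intro Henstock_Kurzweil_Integration.integral_combine)
  then show ?thesis
    unfolding fd fc by (simp add: algebra_simps)
qed

lemma wderiv_unique_ae:
  fixes f g1 g2 :: "real \<Rightarrow> 'a::euclidean_space"
  assumes w1: "wderiv a b f g1" and w2: "wderiv a b f g2"
  shows "negligible {x \<in> {a..b}. g1 x \<noteq> g2 x}"
proof -
  have ai: "g1 absolutely_integrable_on {a..b}" "g2 absolutely_integrable_on {a..b}"
    using w1 w2 unfolding wderiv_def by blast+
  have "negligible {x \<in> {a..b}. g1 x - g2 x \<noteq> 0}"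
  proof (rule negligible_nonzero_if_interval_integrals_zero)
    show "(\<lambda>x. g1 x - g2 x) absolutely_integrable_on {a..b}"
      using set_integral_diff(1)[OF ai] .
    fix c d assume cd: "a \<le> c" "d \<le> b"
    show "integral {c..d} (\<lambda>x. g1 x - g2 x) = 0"
    proof (cases "c \<le> d")
      case True
      have "g1 integrable_on {c..d}" "g2 integrable_on {c..d}"
        using cd by (auto intro!: wderiv_integrable_on_subinterval[OF w1] wderiv_integrable_on_subinterval[OF w2])
      then show ?thesis
        using wderiv_integral[OF w1 cd(1) True cd(2)] wderiv_integral[OF w2 cd(1) True cd(2)]
        by (simp add: integral_diff)
    qed simp
  qed
  then show ?thesis by simp
qed

lemma wderiv_cong:
  assumes w: "wderiv a b f g" and ab: "a \<le> b" and eq: "\<And>t. t \<in> {a..b} \<Longrightarrow> f t = f' t"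
  shows "wderiv a b f' g"
  unfolding wderiv_def
proof (intro conjI ballI)
  show "g absolutely_integrable_on {a..b}" using w unfolding wderiv_def by blast
  fix t assume t: "t \<in> {a..b}"
  have "f t = f a + integral {a..t} g" using w t unfolding wderiv_def by blast
  then show "f' t = f' a + integral {a..t} g" using ab eq t by simp
qed

section \<open>Meshes and the nodal P1 interpolant\<close>

lemma is_mesh_endpoints: "is_mesh a b xs M \<Longrightarrow> xs 0 = a \<and> xs M = b"
  by (simp add: is_mesh_def)

lemma mesh_strict_mono:
  assumes m: "is_mesh a b xs M" and "i < j" "j \<le> M"
  shows "xs i < xs j"
  using assms(2,3)
proof (induction j)
  case (Suc j)
  have "xs j < xs (Suc j)" using m Suc.prems unfolding is_mesh_def by auto
  with Suc show ?case by (cases "i = j") auto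
qed simp

lemma mesh_mono:
  assumes m: "is_mesh a b xs M" and "i \<le> j" "j \<le> M"
  shows "xs i \<le> xs j"
  using mesh_strict_mono[OF m, of i j] assms by (cases "i = j") auto

lemma mesh_element_subset:
  assumes m: "is_mesh a b xs M" and "j < M"
  shows "{xs j..xs (Suc j)} \<subseteq> {xs 0..xs M}"
  using mesh_mono[OF m, of 0 j] mesh_mono[OF m, of "Suc j" M] assms by auto

text \<open>At an interior node this is the element to its left; outside [xs 0, xs M] it is junk.\<close>
definition elem_of :: "(nat \<Rightarrow> real) \<Rightarrow> real \<Rightarrow> nat" where
  "elem_of xs t = (LEAST j. t \<le> xs (Suc j))"

definition slope :: "(nat \<Rightarrow> real) \<Rightarrow> (real \<Rightarrow> 'a::euclidean_space) \<Rightarrow> nat \<Rightarrow> 'a" where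
  "slope xs v j = (1 / (xs (Suc j) - xs j)) *\<^sub>R (v (xs (Suc j)) - v (xs j))"

definition interp1_deriv :: "(nat \<Rightarrow> real) \<Rightarrow> (real \<Rightarrow> 'a::euclidean_space) \<Rightarrow> real \<Rightarrow> 'a" where
  "interp1_deriv xs v t = slope xs v (elem_of xs t)"

lemma interp1_elem_of:
  "interp1 xs v t = v (xs (elem_of xs t)) + (t - xs (elem_of xs t)) *\<^sub>R slope xs v (elem_of xs t)"
  by (simp add: interp1_def elem_of_def slope_def Let_def)

lemma elem_of_bounds:
  assumes m: "is_mesh a b xs M" and t: "xs 0 \<le> t" "t \<le> xs M"
  shows "elem_of xs t < M" "t \<le> xs (Suc (elem_of xs t))"
    "elem_of xs t = 0 \<or> xs (elem_of xs t) < t"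
proof -
  have M: "Suc (M - 1) = M" using m unfolding is_mesh_def by auto
  then have ex: "t \<le> xs (Suc (M - 1))" using t by simp
  show "t \<le> xs (Suc (elem_of xs t))"
    unfolding elem_of_def using ex by (rule LeastI)
  have "elem_of xs t \<le> M - 1"
    unfolding elem_of_def using ex by (rule Least_le)
  then show "elem_of xs t < M" using M by linarith
  show "elem_of xs t = 0 \<or> xs (elem_of xs t) < t"
  proof (cases "elem_of xs t")
    case (Suc l)
    then have "\<not> t \<le> xs (Suc l)"
      unfolding elem_of_def by (metis lessI not_less_Least)
    then show ?thesis using Suc by simp
  qed simp
qed

lemma elem_of_eq:
  assumes m: "is_mesh a b xs M" and j: "j < M" and t: "xs j < t" "t \<le> xs (Suc j)"
  shows "elem_of xs t = j"
  unfolding elem_of_def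
proof (rule Least_equality)
  fix k assume k: "t \<le> xs (Suc k)"
  show "j \<le> k"
  proof (rule ccontr)
    assume "\<not> j \<le> k"
    then have "xs (Suc k) \<le> xs j" using mesh_mono[OF m, of "Suc k" j] j by simp
    then show False using k t by simp
  qed
qed (use t in simp)

lemma interp1_on_element:
  assumes m: "is_mesh a b xs M" and j: "j < M" and t: "xs j \<le> t" "t \<le> xs (Suc j)"
  shows "interp1 xs v t = v (xs j) + (t - xs j) *\<^sub>R slope xs v j"
proof (cases "t = xs j")
  case True
  have "xs 0 \<le> t" "t \<le> xs M"
    using mesh_element_subset[OF m j] t by auto
  note bounds = elem_of_bounds[OF m this]
  let ?k = "elem_of xs t"
  consider "?k = j" | "?k < j" | "j < ?k" by linarith
  then show ?thesis
  proof cases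
    case 2
    then have "xs (Suc ?k) \<le> xs j" using mesh_mono[OF m, of "Suc ?k" j] j by simp
    then have "t = xs (Suc ?k)" using bounds(2) t by simp
    moreover have "xs ?k < xs (Suc ?k)"
      using mesh_strict_mono[OF m, of ?k "Suc ?k"] bounds(1) by simp
    ultimately show ?thesis
      using True by (simp add: interp1_elem_of slope_def)
  next
    case 3
    then have "xs j < xs ?k" using mesh_strict_mono[OF m, of j ?k] bounds(1) by simp
    then show ?thesis using bounds(3) 3 True by auto
  qed (simp add: interp1_elem_of)
next
  case False
  then show ?thesis using elem_of_eq[OF m j, of t] t by (simp add: interp1_elem_of)
qed

lemma interp1_node:
  assumes m: "is_mesh a b xs M" and i: "i \<le> M"
  shows "interp1 xs v (xs i) = v (xs i)"
proof (cases "i < M")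
  case True
  then show ?thesis
    using interp1_on_element[OF m True, of "xs i" v] mesh_mono[OF m, of i "Suc i"] by simp
next
  case False
  obtain j where "M = Suc j" using m unfolding is_mesh_def by (cases M) auto
  then have j: "j < M" "i = Suc j" using False i by auto
  have "xs j < xs (Suc j)" using mesh_strict_mono[OF m, of j "Suc j"] j by simp
  then show ?thesis
    using interp1_on_element[OF m j(1), of "xs (Suc j)" v] j by (simp add: slope_def)
qed

lemma interp1_deriv_on_element:
  assumes m: "is_mesh a b xs M" and j: "j < M" and t: "xs j < t" "t \<le> xs (Suc j)"
  shows "interp1_deriv xs v t = slope xs v j"
  unfolding interp1_deriv_def elem_of_eq[OF m j t] ..

lemma off_nodes_in_element:
  assumes m: "is_mesh a b xs M" and x: "xs 0 \<le> x" "x \<le> xs M" "x \<notin> xs ` {..M}"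
  obtains j where "j < M" "xs j < x" "x < xs (Suc j)"
proof -
  note bounds = elem_of_bounds[OF m x(1,2)]
  let ?k = "elem_of xs x"
  have "xs ?k < x"
    using bounds(3) x by (cases "?k = 0") (auto simp: order.order_iff_strict)
  moreover have "x \<noteq> xs (Suc ?k)" using x(3) bounds(1) by auto
  ultimately show ?thesis using bounds(1,2) that by auto
qed

lemma integrable_on_mesh:
  fixes f :: "real \<Rightarrow> 'b::banach"
  assumes m: "is_mesh a b xs M" and f: "\<And>j. j < M \<Longrightarrow> f integrable_on {xs j..xs (Suc j)}"
  shows "f integrable_on {xs 0..xs M}"
proof -
  have "f integrable_on {xs 0..xs n}" if "n \<le> M" for n
    using that
  proof (induction n)
    case (Suc n)
    then show ?case
      using f mesh_mono[OF m, of 0 n] mesh_mono[OF m, of n "Suc n"]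
      by (intro Henstock_Kurzweil_Integration.integrable_combine[of "xs 0" "xs n" "xs (Suc n)"]) auto
  qed (metis box_real(2) integrable_on_refl)
  then show ?thesis by simp
qed

lemma integral_on_mesh:
  fixes f :: "real \<Rightarrow> 'b::banach"
  assumes m: "is_mesh a b xs M" and f: "f integrable_on {xs 0..xs M}"
  shows "integral {xs 0..xs M} f = (\<Sum>j<M. integral {xs j..xs (Suc j)} f)"
proof -
  have "integral {xs 0..xs n} f = (\<Sum>j<n. integral {xs j..xs (Suc j)} f)" if "n \<le> M" for n
    using that
  proof (induction n)
    case (Suc n)
    have le: "xs 0 \<le> xs n" "xs n \<le> xs (Suc n)" "xs (Suc n) \<le> xs M"
      using mesh_mono[OF m] Suc.prems by auto
    have "f integrable_on {xs 0..xs (Suc n)}"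
      by (rule integrable_on_subinterval[OF f]) (use le in auto)
    then have "integral {xs 0..xs n} f + integral {xs n..xs (Suc n)} f = integral {xs 0..xs (Suc n)} f"
      using le by (intro Henstock_Kurzweil_Integration.integral_combine) auto
    then show ?case using Suc by simp
  qed simp
  then show ?thesis by simp
qed

lemma continuous_on_interp1:
  assumes m: "is_mesh a b xs M"
  shows "continuous_on {xs 0..xs M} (interp1 xs v)"
proof -
  have "continuous_on {xs 0..xs n} (interp1 xs v)" if "n \<le> M" for n
    using that
  proof (induction n)
    case (Suc n)
    have "continuous_on {xs n..xs (Suc n)} (\<lambda>t. v (xs n) + (t - xs n) *\<^sub>R slope xs v n)"
      by (intro continuous_intros)
    then have "continuous_on {xs n..xs (Suc n)} (interp1 xs v)"
      using interp1_on_element[OF m, of n, symmetric] Suc.prems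
      by (elim continuous_on_eq) auto
    moreover have "{xs 0..xs (Suc n)} = {xs 0..xs n} \<union> {xs n..xs (Suc n)}"
      using mesh_mono[OF m, of 0 n] mesh_mono[OF m, of n "Suc n"] Suc.prems by auto
    ultimately show ?case
      using Suc by (auto intro: continuous_on_closed_Un)
  qed simp
  then show ?thesis by simp
qed

lemma interp1_has_vector_derivative:
  assumes m: "is_mesh a b xs M" and j: "j < M" and x: "xs j < x" "x < xs (Suc j)"
  shows "(interp1 xs v has_vector_derivative slope xs v j) (at x)"
proof (rule has_vector_derivative_transform_within_open)
  show "((\<lambda>t. v (xs j) + (t - xs j) *\<^sub>R slope xs v j) has_vector_derivative slope xs v j) (at x)"
    by (auto intro!: derivative_eq_intros)
  show "x \<in> {xs j<..<xs (Suc j)}" using x by simp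
  fix y assume "y \<in> {xs j<..<xs (Suc j)}"
  then show "v (xs j) + (y - xs j) *\<^sub>R slope xs v j = interp1 xs v y"
    using interp1_on_element[OF m j, of y v] by simp
qed simp

lemma interp1_has_integral:
  assumes m: "is_mesh a b xs M" and t: "xs 0 \<le> t" "t \<le> xs M"
  shows "(interp1_deriv xs v has_integral (interp1 xs v t - interp1 xs v (xs 0))) {xs 0..t}"
proof (rule fundamental_theorem_of_calculus_strong[of "xs ` {..M}"])
  show "continuous_on {xs 0..t} (interp1 xs v)"
    by (rule continuous_on_subset[OF continuous_on_interp1[OF m]]) (use t in auto)
  fix x assume x: "x \<in> {xs 0..t} - xs ` {..M}"
  then obtain j where j: "j < M" "xs j < x" "x < xs (Suc j)"
    using off_nodes_in_element[OF m, of x] t by auto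
  then show "(interp1 xs v has_vector_derivative interp1_deriv xs v x) (at x)"
    using interp1_has_vector_derivative[OF m j] interp1_deriv_on_element[OF m j(1), of x v] by simp
qed (use t in auto)

lemma wderiv_interp1:
  assumes m: "is_mesh a b xs M"
  shows "wderiv (xs 0) (xs M) (interp1 xs v) (interp1_deriv xs v)"
  unfolding wderiv_def
proof
  have "xs 0 \<le> xs M" using mesh_mono[OF m, of 0 M] by simp
  then have "interp1_deriv xs v integrable_on {xs 0..xs M}"
    using interp1_has_integral[OF m] by blast
  moreover have "norm (interp1_deriv xs v x) \<le> (\<Sum>j<M. norm (slope xs v j))"
    if "x \<in> {xs 0..xs M}" for x
    unfolding interp1_deriv_def
    using elem_of_bounds(1)[OF m, of x] that
    by (intro member_le_sum[where f="\<lambda>j. norm (slope xs v j)"]) auto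
  ultimately show "interp1_deriv xs v absolutely_integrable_on {xs 0..xs M}"
    by (intro absolutely_integrable_integrable_bound[where g="\<lambda>_. \<Sum>j<M. norm (slope xs v j)"]) auto
  show "\<forall>t\<in>{xs 0..xs M}. interp1 xs v t = interp1 xs v (xs 0) + integral {xs 0..t} (interp1_deriv xs v)"
  proof
    fix t assume "t \<in> {xs 0..xs M}"
    then have "integral {xs 0..t} (interp1_deriv xs v) = interp1 xs v t - interp1 xs v (xs 0)"
      using interp1_has_integral[OF m] by (intro integral_unique) auto
    then show "interp1 xs v t = interp1 xs v (xs 0) + integral {xs 0..t} (interp1_deriv xs v)"
      by simp
  qed
qed

lemma interp1_deriv_energy:
  assumes m: "is_mesh a b xs M"
  shows "sq_int (xs 0) (xs M) (interp1_deriv xs v)"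
    "L2sq (xs 0) (xs M) (interp1_deriv xs v) = (\<Sum>j<M. (xs (Suc j) - xs j) * (norm (slope xs v j))\<^sup>2)"
proof -
  have spike: "(norm (interp1_deriv xs v t))\<^sup>2 = (norm (slope xs v j))\<^sup>2"
    if "j < M" "t \<in> {xs j..xs (Suc j)} - {xs j}" for j t
    using interp1_deriv_on_element[OF m that(1), of t v] that(2) by simp
  have element: "((\<lambda>t. (norm (interp1_deriv xs v t))\<^sup>2) has_integral
      (xs (Suc j) - xs j) * (norm (slope xs v j))\<^sup>2) {xs j..xs (Suc j)}" if j: "j < M" for j
  proof (rule has_integral_spike_finite[of "{xs j}"])
    show "((\<lambda>_. (norm (slope xs v j))\<^sup>2) has_integral (xs (Suc j) - xs j) * (norm (slope xs v j))\<^sup>2)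
        {xs j..xs (Suc j)}"
      using has_integral_const_real[of "(norm (slope xs v j))\<^sup>2" "xs j" "xs (Suc j)"]
        mesh_mono[OF m, of j "Suc j"] j by (simp add: mult.commute)
  qed (use spike[OF j] in auto)
  have int: "(\<lambda>t. (norm (interp1_deriv xs v t))\<^sup>2) integrable_on {xs 0..xs M}"
    using element by (blast intro: integrable_on_mesh[OF m])
  then show "sq_int (xs 0) (xs M) (interp1_deriv xs v)" by (simp add: sq_int_def)
  show "L2sq (xs 0) (xs M) (interp1_deriv xs v) = (\<Sum>j<M. (xs (Suc j) - xs j) * (norm (slope xs v j))\<^sup>2)"
    unfolding L2sq_def integral_on_mesh[OF m int] using element by (auto intro!: sum.cong)
qed

section \<open>Cauchy-Schwarz on an interval\<close>

lemma has_integral_norm_diff_const_sq: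
  fixes g :: "real \<Rightarrow> 'a::euclidean_space"
  assumes pq: "p \<le> q" and g: "g integrable_on {p..q}"
    and g2: "(\<lambda>s. (norm (g s))\<^sup>2) integrable_on {p..q}"
  shows "((\<lambda>s. (norm (g s - c))\<^sup>2) has_integral
    integral {p..q} (\<lambda>s. (norm (g s))\<^sup>2) - 2 * (integral {p..q} g \<bullet> c) + (q - p) * (norm c)\<^sup>2) {p..q}"
proof -
  have expand: "(norm (g s - c))\<^sup>2 = (norm (g s))\<^sup>2 - 2 * (g s \<bullet> c) + (norm c)\<^sup>2" for s
    by (simp add: power2_norm_eq_inner inner_diff_left inner_diff_right inner_commute)
  have "((\<lambda>s. g s \<bullet> c) has_integral integral {p..q} g \<bullet> c) {p..q}"
    using has_integral_linear[OF integrable_integral[OF g] bounded_linear_inner_left] by (simp add: o_def)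
  moreover have "((\<lambda>_. (norm c)\<^sup>2) has_integral (q - p) * (norm c)\<^sup>2) {p..q}"
    using has_integral_const_real[of "(norm c)\<^sup>2" p q] pq by simp
  ultimately have "((\<lambda>s. (norm (g s))\<^sup>2 - 2 * (g s \<bullet> c) + (norm c)\<^sup>2) has_integral
      integral {p..q} (\<lambda>s. (norm (g s))\<^sup>2) - 2 * (integral {p..q} g \<bullet> c) + (q - p) * (norm c)\<^sup>2) {p..q}"
    by (intro has_integral_add has_integral_diff has_integral_mult_right integrable_integral[OF g2])
  then show ?thesis by (simp only: expand)
qed

lemma norm_integral_sq_le:
  fixes g :: "real \<Rightarrow> 'a::euclidean_space"
  assumes pq: "p \<le> q" and g: "g integrable_on {p..q}"
    and g2: "(\<lambda>s. (norm (g s))\<^sup>2) integrable_on {p..q}"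
  shows "(norm (integral {p..q} g))\<^sup>2 \<le> (q - p) * integral {p..q} (\<lambda>s. (norm (g s))\<^sup>2)"
proof (cases "p = q")
  case False
  then have h: "q - p > 0" using pq by simp
  define G where "G = integral {p..q} g"
  define c where "c = (1 / (q - p)) *\<^sub>R G"
  have "0 \<le> integral {p..q} (\<lambda>s. (norm (g s))\<^sup>2) - 2 * (G \<bullet> c) + (q - p) * (norm c)\<^sup>2"
    using has_integral_norm_diff_const_sq[OF pq g g2, of c] unfolding G_def
    by (rule has_integral_nonneg) simp
  moreover have "G \<bullet> c = (norm G)\<^sup>2 / (q - p)"
    by (simp add: c_def power2_norm_eq_inner)
  moreover have "(q - p) * (norm c)\<^sup>2 = (norm G)\<^sup>2 / (q - p)"
    using h by (simp add: c_def power2_eq_square)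
  ultimately have "(norm G)\<^sup>2 / (q - p) \<le> integral {p..q} (\<lambda>s. (norm (g s))\<^sup>2)"
    by simp
  then show ?thesis
    using h by (simp add: G_def pos_divide_le_eq mult.commute)
qed simp

lemma integral_eq_linear_if_cauchy_schwarz_eq:
  fixes g :: "real \<Rightarrow> 'a::euclidean_space"
  assumes t: "p \<le> t" "t \<le> q" and g: "g integrable_on {p..q}"
    and g2: "(\<lambda>s. (norm (g s))\<^sup>2) integrable_on {p..q}"
    and mean: "integral {p..q} g = (q - p) *\<^sub>R D"
    and energy: "integral {p..q} (\<lambda>s. (norm (g s))\<^sup>2) = (q - p) * (norm D)\<^sup>2"
  shows "integral {p..t} g = (t - p) *\<^sub>R D"
proof -
  define e where "e s = g s - D" for s
  have "integral {p..q} (\<lambda>s. (norm (g s))\<^sup>2) - 2 * (integral {p..q} g \<bullet> D) + (q - p) * (norm D)\<^sup>2 = 0"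
    unfolding mean energy by (simp add: power2_norm_eq_inner)
  then have e2: "((\<lambda>s. (norm (e s))\<^sup>2) has_integral 0) {p..q}"
    using has_integral_norm_diff_const_sq[OF order.trans[OF t] g g2, of D] by (simp add: e_def)
  have sub: "{p..t} \<subseteq> {p..q}" using t by auto
  have gt: "g integrable_on {p..t}" by (rule integrable_on_subinterval[OF g sub])
  have et: "e integrable_on {p..t}" unfolding e_def by (intro integrable_diff gt integrable_const_ivl)
  have e2t: "(\<lambda>s. (norm (e s))\<^sup>2) integrable_on {p..t}"
    by (rule integrable_on_subinterval[OF has_integral_integrable[OF e2] sub])
  have "integral {p..t} (\<lambda>s. (norm (e s))\<^sup>2) \<le> integral {p..q} (\<lambda>s. (norm (e s))\<^sup>2)"
    by (rule integral_subset_le[OF sub e2t has_integral_integrable[OF e2]]) simp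
  also have "\<dots> = 0"
    using e2 by (rule integral_unique)
  finally have "(t - p) * integral {p..t} (\<lambda>s. (norm (e s))\<^sup>2) \<le> 0"
    using t(1) by (simp add: mult_nonneg_nonpos)
  then have "(norm (integral {p..t} e))\<^sup>2 \<le> 0"
    using norm_integral_sq_le[OF t(1) et e2t] by linarith
  then have "integral {p..t} e = 0" by simp
  moreover have "integral {p..t} e = integral {p..t} g - (t - p) *\<^sub>R D"
    unfolding e_def using t(1) by (simp add: integral_diff[OF gt integrable_const_ivl])
  ultimately show ?thesis by simp
qed

section \<open>Elementwise energy estimates\<close>

lemma integral_element_wderiv:
  assumes m: "is_mesh a b xs M" and w: "wderiv (xs 0) (xs M) v v2" and j: "j < M"
  shows "integral {xs j..xs (Suc j)} v2 = (xs (Suc j) - xs j) *\<^sub>R slope xs v j"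
proof -
  have "xs j < xs (Suc j)" using mesh_strict_mono[OF m, of j "Suc j"] j by simp
  moreover have "integral {xs j..xs (Suc j)} v2 = v (xs (Suc j)) - v (xs j)"
    using mesh_element_subset[OF m j] calculation by (intro wderiv_integral[OF w]) auto
  ultimately show ?thesis by (simp add: slope_def)
qed

lemma integrable_element_wderiv:
  assumes m: "is_mesh a b xs M" and w: "wderiv (xs 0) (xs M) v v2"
    and s: "sq_int (xs 0) (xs M) v2" and j: "j < M"
  shows "v2 integrable_on {xs j..xs (Suc j)}"
    "(\<lambda>s. (norm (v2 s))\<^sup>2) integrable_on {xs j..xs (Suc j)}"
proof -
  note sub = mesh_element_subset[OF m j]
  show "v2 integrable_on {xs j..xs (Suc j)}"
    by (rule wderiv_integrable_on_subinterval[OF w sub])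
  show "(\<lambda>s. (norm (v2 s))\<^sup>2) integrable_on {xs j..xs (Suc j)}"
    using s sub unfolding sq_int_def by (rule integrable_on_subinterval)
qed

lemma slope_energy_le:
  assumes m: "is_mesh a b xs M" and w: "wderiv (xs 0) (xs M) v v2"
    and s: "sq_int (xs 0) (xs M) v2" and j: "j < M"
  shows "(xs (Suc j) - xs j) * (norm (slope xs v j))\<^sup>2
    \<le> integral {xs j..xs (Suc j)} (\<lambda>s. (norm (v2 s))\<^sup>2)"
proof -
  define h where "h = xs (Suc j) - xs j"
  have h: "h > 0" using mesh_strict_mono[OF m, of j "Suc j"] j by (simp add: h_def)
  have "h * (h * (norm (slope xs v j))\<^sup>2) = (norm (integral {xs j..xs (Suc j)} v2))\<^sup>2"
    using h by (simp add: integral_element_wderiv[OF m w j] h_def power2_eq_square)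
  also have "\<dots> \<le> h * integral {xs j..xs (Suc j)} (\<lambda>s. (norm (v2 s))\<^sup>2)"
    using norm_integral_sq_le[OF _ integrable_element_wderiv[OF m w s j]] h by (simp add: h_def)
  finally show ?thesis
    using h by (simp add: h_def)
qed

lemma affine_on_element_if_slope_energy_eq:
  assumes m: "is_mesh a b xs M" and w: "wderiv (xs 0) (xs M) v v2"
    and s: "sq_int (xs 0) (xs M) v2" and j: "j < M"
    and eq: "(xs (Suc j) - xs j) * (norm (slope xs v j))\<^sup>2
      = integral {xs j..xs (Suc j)} (\<lambda>s. (norm (v2 s))\<^sup>2)"
    and t: "t \<in> {xs j..xs (Suc j)}"
  shows "v t = v (xs j) + (t - xs j) *\<^sub>R slope xs v j"
proof -
  have "integral {xs j..t} v2 = (t - xs j) *\<^sub>R slope xs v j"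
    by (rule integral_eq_linear_if_cauchy_schwarz_eq[OF _ _ integrable_element_wderiv[OF m w s j]
          integral_element_wderiv[OF m w j] eq[symmetric]]) (use t in auto)
  moreover have "integral {xs j..t} v2 = v t - v (xs j)"
    using t mesh_element_subset[OF m j] by (intro wderiv_integral[OF w]) auto
  ultimately show ?thesis by (simp add: algebra_simps)
qed

lemma L2sq_on_mesh:
  assumes m: "is_mesh a b xs M" and s: "sq_int (xs 0) (xs M) g"
  shows "L2sq (xs 0) (xs M) g = (\<Sum>j<M. integral {xs j..xs (Suc j)} (\<lambda>s. (norm (g s))\<^sup>2))"
  using integral_on_mesh[OF m] s by (simp add: L2sq_def sq_int_def)

lemma L2sq_interp1_deriv_le:
  assumes m: "is_mesh a b xs M" and w: "wderiv (xs 0) (xs M) v v2" and s: "sq_int (xs 0) (xs M) v2"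
  shows "L2sq (xs 0) (xs M) (interp1_deriv xs v) \<le> L2sq (xs 0) (xs M) v2"
  unfolding interp1_deriv_energy(2)[OF m] L2sq_on_mesh[OF m s]
  by (intro sum_mono slope_energy_le[OF m w s]) simp

lemma affine_on_elements_if_L2sq_le:
  assumes m: "is_mesh a b xs M" and w: "wderiv (xs 0) (xs M) v v2" and s: "sq_int (xs 0) (xs M) v2"
    and le: "L2sq (xs 0) (xs M) v2 \<le> L2sq (xs 0) (xs M) (interp1_deriv xs v)"
    and j: "j < M" and t: "t \<in> {xs j..xs (Suc j)}"
  shows "v t = v (xs j) + (t - xs j) *\<^sub>R slope xs v j"
proof (rule affine_on_element_if_slope_energy_eq[OF m w s j _ t])
  define defect where "defect j = integral {xs j..xs (Suc j)} (\<lambda>s. (norm (v2 s))\<^sup>2)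
      - (xs (Suc j) - xs j) * (norm (slope xs v j))\<^sup>2" for j
  have "(\<Sum>j<M. defect j) \<le> 0"
    using le unfolding interp1_deriv_energy(2)[OF m] L2sq_on_mesh[OF m s] defect_def
    by (simp add: sum_subtractf)
  moreover have "0 \<le> defect j" if "j < M" for j
    using slope_energy_le[OF m w s that] by (simp add: defect_def)
  ultimately have "(\<Sum>j<M. defect j) = 0"
    by (meson order.antisym lessThan_iff sum_nonneg)
  then have "defect j = 0"
    using sum_nonneg_eq_0_iff[of "{..<M}" defect] \<open>\<And>j. j < M \<Longrightarrow> 0 \<le> defect j\<close> j by simp
  then show "(xs (Suc j) - xs j) * (norm (slope xs v j))\<^sup>2 = integral {xs j..xs (Suc j)} (\<lambda>s. (norm (v2 s))\<^sup>2)"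
    using j by (simp add: defect_def)
qed

section \<open>Piecewise quadratic functions and J2\<close>

lemma quadratic_if_derivative_affine:
  fixes f :: "real \<Rightarrow> 'a::euclidean_space"
  assumes d: "\<And>t. t \<in> {p..q} \<Longrightarrow> (f has_vector_derivative (A + (t - p) *\<^sub>R D)) (at t within {p..q})"
  shows "\<exists>c. \<forall>t\<in>{p..q}. f t = (\<Sum>j\<le>2. t ^ j *\<^sub>R c j)"
proof -
  define P where "P t = (t - p) *\<^sub>R A + ((t - p)\<^sup>2 / 2) *\<^sub>R D" for t
  have "\<exists>K. \<forall>t\<in>{p..q}. f t - P t = K"
  proof (rule has_derivative_zero_constant)
    fix t assume t: "t \<in> {p..q}"
    have dP: "(P has_vector_derivative (A + (t - p) *\<^sub>R D)) (at t within {p..q})"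
      unfolding P_def[abs_def]
      by (auto intro!: derivative_eq_intros simp: algebra_simps)
        (rule euclidean_eqI, simp add: inner_add_left field_simps)
    have "((\<lambda>t. f t - P t) has_vector_derivative 0) (at t within {p..q})"
      using has_vector_derivative_diff[OF d[OF t] dP] by simp
    then show "((\<lambda>t. f t - P t) has_derivative (\<lambda>h. 0)) (at t within {p..q})"
      by (simp add: has_vector_derivative_def)
  qed simp
  then obtain K where K: "\<And>t. t \<in> {p..q} \<Longrightarrow> f t = K + P t"
    by (metis diff_add_cancel add.commute)
  define c where "c j = (if j = 0 then K - p *\<^sub>R A + (p\<^sup>2 / 2) *\<^sub>R D
    else if j = 1 then A - p *\<^sub>R D else (1 / 2) *\<^sub>R D)" for j :: nat
  have "K + P t = c 0 + t *\<^sub>R c 1 + t\<^sup>2 *\<^sub>R c 2" for t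
    unfolding c_def P_def
    by (rule euclidean_eqI) (simp add: inner_add_left inner_diff_left power2_eq_square field_simps)
  moreover have "(\<Sum>j\<le>2. t ^ j *\<^sub>R c j) = c 0 + t *\<^sub>R c 1 + t\<^sup>2 *\<^sub>R c 2" for t
    by (simp add: numeral_2_eq_2)
  ultimately show ?thesis
    using K by (intro exI[of _ c]) simp
qed

lemma S_k0_2_if_derivative_affine_on_elements:
  fixes f f' :: "real \<Rightarrow> 'a::euclidean_space"
  assumes m: "is_mesh a b xs M"
    and d: "\<And>t. t \<in> {xs 0..xs M} \<Longrightarrow> (f has_vector_derivative f' t) (at t within {xs 0..xs M})"
    and affine: "\<And>j t. j < M \<Longrightarrow> t \<in> {xs j..xs (Suc j)} \<Longrightarrow> f' t = A j + (t - xs j) *\<^sub>R D j"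
  shows "S_k0 2 xs M f"
  unfolding S_k0_def
proof (intro conjI ballI)
  show "continuous_on {xs 0..xs M} f"
    using d has_vector_derivative_continuous continuous_on_eq_continuous_within by blast
  fix i assume i: "i \<in> {1..M}"
  define j where "j = i - 1"
  have j: "j < M" "i = Suc j" using i by (auto simp: j_def)
  note sub = mesh_element_subset[OF m j(1)]
  have "\<exists>c. \<forall>t\<in>{xs j..xs (Suc j)}. f t = (\<Sum>k\<le>2. t ^ k *\<^sub>R c k)"
  proof (rule quadratic_if_derivative_affine)
    fix t assume t: "t \<in> {xs j..xs (Suc j)}"
    then have "(f has_vector_derivative f' t) (at t within {xs j..xs (Suc j)})"
      using sub by (intro has_vector_derivative_within_subset[OF d]) auto
    then show "(f has_vector_derivative A j + (t - xs j) *\<^sub>R D j) (at t within {xs j..xs (Suc j)})"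
      using affine[OF j(1) t] by simp
  qed
  then show "\<exists>c. \<forall>t\<in>{xs (i - 1)..xs i}. f t = (\<Sum>k\<le>2. t ^ k *\<^sub>R c k)"
    using j by simp
qed

lemma J2_has_vector_derivative:
  assumes m: "is_mesh a b xs M" and t: "t \<in> {xs 0..xs M}"
  shows "(J2 xs u u1 has_vector_derivative interp1 xs u1 t) (at t within {xs 0..xs M})"
  unfolding J2_def[abs_def]
  using integral_has_vector_derivative[OF continuous_on_interp1[OF m] t]
  by (auto intro!: derivative_eq_intros)

lemma H2_rep_J2:
  assumes m: "is_mesh a b xs M"
  shows "H2_rep (xs 0) (xs M) (J2 xs u u1) (interp1 xs u1) (interp1_deriv xs u1)"
  unfolding H2_rep_def
  using J2_has_vector_derivative[OF m] wderiv_interp1[OF m] interp1_deriv_energy(1)[OF m] by blast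

lemma S_k0_2_J2:
  assumes m: "is_mesh a b xs M"
  shows "S_k0 2 xs M (J2 xs u u1)"
  using J2_has_vector_derivative[OF m] interp1_on_element[OF m]
  by (rule S_k0_2_if_derivative_affine_on_elements[OF m]) auto

lemma L2sq_wderiv_interp1:
  assumes m: "is_mesh a b xs M" and w: "wderiv (xs 0) (xs M) (interp1 xs v) g"
  shows "L2sq (xs 0) (xs M) g = L2sq (xs 0) (xs M) (interp1_deriv xs v)"
  unfolding L2sq_def
  by (rule integral_spike[OF wderiv_unique_ae[OF w wderiv_interp1[OF m]]]) auto

lemma wderiv_interp1_if_H2_rep_J2:
  assumes m: "is_mesh a b xs M" and H: "H2_rep (xs 0) (xs M) (J2 xs u u1) w1 w2"
  shows "wderiv (xs 0) (xs M) (interp1 xs u1) w2"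
proof -
  have ab: "xs 0 < xs M" using mesh_strict_mono[OF m, of 0 M] m by (simp add: is_mesh_def)
  have w1: "w1 t = interp1 xs u1 t" if t: "t \<in> {xs 0..xs M}" for t
  proof -
    have "(J2 xs u u1 has_vector_derivative w1 t) (at t within {xs 0..xs M})"
      using H t unfolding H2_rep_def by blast
    then show ?thesis
      by (rule vector_derivative_unique_within_closed_interval[of "xs 0" "xs M" t,
            unfolded box_real(2), OF ab t _ J2_has_vector_derivative[OF m t]])
  qed
  have "wderiv (xs 0) (xs M) w1 w2" using H unfolding H2_rep_def by blast
  then show ?thesis by (rule wderiv_cong[OF _ less_imp_le[OF ab] w1])
qed

lemma J2_energy:
  fixes u :: "real \<Rightarrow> 'a::euclidean_space"
  assumes m: "is_mesh a b xs M" and H: "H2_rep (xs 0) (xs M) u u1 u2"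
  shows "S_k0 2 xs M (J2 xs u u1) \<and>
    (\<exists>w2. H2_rep (xs 0) (xs M) (J2 xs u u1) (interp1 xs u1) w2) \<and>
    (\<exists>v2. wderiv (xs 0) (xs M) (interp1 xs u1) v2 \<and> sq_int (xs 0) (xs M) v2) \<and>
    (\<forall>w1 w2 v2. H2_rep (xs 0) (xs M) (J2 xs u u1) w1 w2 \<longrightarrow>
       wderiv (xs 0) (xs M) (interp1 xs u1) v2 \<longrightarrow> sq_int (xs 0) (xs M) v2 \<longrightarrow>
       L2sq (xs 0) (xs M) w2 = L2sq (xs 0) (xs M) v2 \<and> L2sq (xs 0) (xs M) v2 \<le> L2sq (xs 0) (xs M) u2)"
proof (intro conjI allI impI)
  show "S_k0 2 xs M (J2 xs u u1)" by (rule S_k0_2_J2[OF m])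
  show "\<exists>w2. H2_rep (xs 0) (xs M) (J2 xs u u1) (interp1 xs u1) w2"
    using H2_rep_J2[OF m] by blast
  show "\<exists>v2. wderiv (xs 0) (xs M) (interp1 xs u1) v2 \<and> sq_int (xs 0) (xs M) v2"
    using wderiv_interp1[OF m] interp1_deriv_energy(1)[OF m] by blast
  fix w1 w2 v2
  assume J: "H2_rep (xs 0) (xs M) (J2 xs u u1) w1 w2" and v2: "wderiv (xs 0) (xs M) (interp1 xs u1) v2"
  show "L2sq (xs 0) (xs M) w2 = L2sq (xs 0) (xs M) v2"
    using L2sq_wderiv_interp1[OF m wderiv_interp1_if_H2_rep_J2[OF m J]] L2sq_wderiv_interp1[OF m v2]
    by simp
  show "L2sq (xs 0) (xs M) v2 \<le> L2sq (xs 0) (xs M) u2"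
  proof -
    have "wderiv (xs 0) (xs M) u1 u2" "sq_int (xs 0) (xs M) u2"
      using H unfolding H2_rep_def by blast+
    then show ?thesis
      using L2sq_wderiv_interp1[OF m v2] L2sq_interp1_deriv_le[OF m] by simp
  qed
qed

lemma minimizer_in_S_k0_2:
  fixes u :: "real \<Rightarrow> 'a::euclidean_space"
  assumes m: "is_mesh a b xs M" and adm: "admissible xs M uD uD1 u u1 u2"
    and min: "\<forall>v v1 v2. admissible xs M uD uD1 v v1 v2 \<longrightarrow> bending (xs 0) (xs M) u2 \<le> bending (xs 0) (xs M) v2"
  shows "S_k0 2 xs M u"
proof -
  have H: "H2_rep (xs 0) (xs M) u u1 u2" using adm unfolding admissible_def by blast
  then have w: "wderiv (xs 0) (xs M) u1 u2" and s: "sq_int (xs 0) (xs M) u2"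
    unfolding H2_rep_def by blast+
  have "admissible xs M uD uD1 (J2 xs u u1) (interp1 xs u1) (interp1_deriv xs u1)"
    using adm H2_rep_J2[OF m] unfolding admissible_def by (simp add: J2_def interp1_node[OF m])
  then have "L2sq (xs 0) (xs M) u2 \<le> L2sq (xs 0) (xs M) (interp1_deriv xs u1)"
    using min by (auto simp: bending_def)
  then have "u1 t = u1 (xs j) + (t - xs j) *\<^sub>R slope xs u1 j"
    if "j < M" "t \<in> {xs j..xs (Suc j)}" for j t
    using affine_on_elements_if_L2sq_le[OF m w s _ that] by blast
  moreover have "(u has_vector_derivative u1 t) (at t within {xs 0..xs M})" if "t \<in> {xs 0..xs M}" for t
    using H that unfolding H2_rep_def by blast
  ultimately show ?thesis
    by (intro S_k0_2_if_derivative_affine_on_elements[OF m])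
qed

theorem corollary2p2:
  fixes a b :: real and xs :: "nat \<Rightarrow> real" and M :: nat
  assumes mesh: "is_mesh a b xs M"
  shows "(\<forall>(u::real \<Rightarrow> 'a::euclidean_space) u1 u2. H2_rep a b u u1 u2 \<longrightarrow>
            S_k0 2 xs M (J2 xs u u1) \<and>
            (\<exists>w2. H2_rep a b (J2 xs u u1) (interp1 xs u1) w2) \<and>
            (\<exists>v2. wderiv a b (interp1 xs u1) v2 \<and> sq_int a b v2) \<and>
            (\<forall>w1 w2 v2. H2_rep a b (J2 xs u u1) w1 w2 \<longrightarrow>
                 wderiv a b (interp1 xs u1) v2 \<longrightarrow> sq_int a b v2 \<longrightarrow>
                 L2sq a b w2 = L2sq a b v2 \<and> L2sq a b v2 \<le> L2sq a b u2))
       \<and>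
         (\<forall>(uD::real \<Rightarrow> 'a) uD1 uD2 u u1 u2. H2_rep a b uD uD1 uD2 \<longrightarrow>
            admissible xs M uD uD1 u u1 u2 \<longrightarrow>
            (\<forall>v v1 v2. admissible xs M uD uD1 v v1 v2 \<longrightarrow> bending a b u2 \<le> bending a b v2) \<longrightarrow>
            S_k0 2 xs M u)"
proof -
  have "a = xs 0" "b = xs M" using is_mesh_endpoints[OF mesh] by simp_all
  then show ?thesis
    using J2_energy[OF mesh] minimizer_in_S_k0_2[OF mesh] by blast
qed

end
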